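(* Let $X,Y$ be distinct candidates, let $T\in SO(P)$ satisfy $T(\mathbf r_{X>Y})=\mathbf r_{X>Y}$, and let $\mathbf p\in P$. Then there exists $\mathbf q\in\mathbb R\mathbf 1$ such that $T(\mathbf p)+\mathbf q\sim_{X,Y}\mathbf p$.
   Context: Fix an integer $n\ge 2$ and a set $\mathbf C$ of $n$ candidates. Fix a composition $\lambda=(\lambda_1,\dots,\lambda_m)$ of $n$ (positive integers with $\sum_i\lambda_i=n$), write $[m]=\{1,\dots,m\}$. A ballot is a function $b:\mathbf C\to[m]$ with $|b^{-1}(i)|=\lambda_i$ for every $i$; $\mathbf C_\lambda$ denotes the set of ballots. The profile space is $P=\mathbb R^{\mathbf C_\lambda}$ with basis $\{\delta_b\}$ (indicator functions) and inner product $\mathbf p\cdot\mathbf q=\sum_b\mathbf p(b)\mathbf q(b)$; $\mathbf 1=\sum_b\delta_b$. For candidates $X,Y$: $\mathbf a_{X>Y}=\sum_{b:\,b(X)<b(Y)}\delta_b$, $\mathbf r_{X>Y}=\mathbf a_{X>Y}-\mathbf a_{Y>X}$. Two profiles are $X,Y$-equivalent, $\mathbf p\sim_{X,Y}\mathbf q$, if $(\mathbf p-\mathbf q)\cdot\mathbf a_{X>Y}=0$ and $(\mathbf p-\mathbf q)\cdot\mathbf a_{Y>X}=0$. $SO(P)$ denotes the group of linear isometries of $P$ of determinant $1$. *)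

theory Defs
  imports Complex_Main "HOL-Combinatorics.Permutations"
begin

text \<open>Candidates are the elements of a finite type 'c (so the candidate set C is UNIV).
A composition lam is a list of positive naturals; m = length lam; [m] = {1..m};
lam_i = lam ! (i - 1).\<close>

definition is_composition :: "nat list \<Rightarrow> nat \<Rightarrow> bool" where
  "is_composition lam n \<longleftrightarrow> (\<forall>x\<in>set lam. 0 < x) \<and> sum_list lam = n"

definition ballots :: "nat list \<Rightarrow> ('c \<Rightarrow> nat) set" where
  "ballots lam = {b. (\<forall>c. b c \<in> {1..length lam}) \<and>
                     (\<forall>i\<in>{1..length lam}. card (b -` {i}) = lam ! (i - 1))}"

text \<open>Profiles: real functions on ballots, represented as functions on all of
'c => nat that vanish outside the ballot set.\<close>

type_synonym 'c profile = "('c \<Rightarrow> nat) \<Rightarrow> real"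

definition profiles :: "nat list \<Rightarrow> 'c profile set" where
  "profiles lam = {p. \<forall>b. b \<notin> ballots lam \<longrightarrow> p b = 0}"

definition pinner :: "nat list \<Rightarrow> 'c profile \<Rightarrow> 'c profile \<Rightarrow> real" where
  "pinner lam p q = (\<Sum>b\<in>ballots lam. p b * q b)"

definition delta :: "nat list \<Rightarrow> ('c \<Rightarrow> nat) \<Rightarrow> 'c profile" where
  "delta lam b = (\<lambda>b'. if b' = b \<and> b \<in> ballots lam then 1 else 0)"

definition ones :: "nat list \<Rightarrow> 'c profile" where
  "ones lam = (\<lambda>b. if b \<in> ballots lam then 1 else 0)"

definition a_pref :: "nat list \<Rightarrow> 'c \<Rightarrow> 'c \<Rightarrow> 'c profile" where
  "a_pref lam X Y = (\<lambda>b. if b \<in> ballots lam \<and> b X < b Y then 1 else 0)"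

definition r_pref :: "nat list \<Rightarrow> 'c \<Rightarrow> 'c \<Rightarrow> 'c profile" where
  "r_pref lam X Y = (\<lambda>b. a_pref lam X Y b - a_pref lam Y X b)"

definition equiv_XY :: "nat list \<Rightarrow> 'c \<Rightarrow> 'c \<Rightarrow> 'c profile \<Rightarrow> 'c profile \<Rightarrow> bool" where
  "equiv_XY lam X Y p q \<longleftrightarrow>
     pinner lam (\<lambda>b. p b - q b) (a_pref lam X Y) = 0 \<and>
     pinner lam (\<lambda>b. p b - q b) (a_pref lam Y X) = 0"

text \<open>Determinant of a linear map on P, via the Leibniz formula for its matrix
M c b = (T delta_b)(c) in the basis {delta_b}.\<close>

definition det_on :: "nat list \<Rightarrow> ('c profile \<Rightarrow> 'c profile) \<Rightarrow> real" where
  "det_on lam T = (\<Sum>\<sigma>\<in>{\<sigma>. \<sigma> permutes ballots lam}.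
      of_int (sign \<sigma>) * (\<Prod>b\<in>ballots lam. T (delta lam b) (\<sigma> b)))"

definition SO_P :: "nat list \<Rightarrow> ('c profile \<Rightarrow> 'c profile) set" where
  "SO_P lam = {T.
     (\<forall>p\<in>profiles lam. T p \<in> profiles lam) \<and>
     (\<forall>p\<in>profiles lam. \<forall>q\<in>profiles lam. T (\<lambda>b. p b + q b) = (\<lambda>b. T p b + T q b)) \<and>
     (\<forall>p\<in>profiles lam. \<forall>c::real. T (\<lambda>b. c * p b) = (\<lambda>b. c * T p b)) \<and>
     (\<forall>p\<in>profiles lam. pinner lam (T p) (T p) = pinner lam p p) \<and>
     det_on lam T = 1}"

end

theory Submission
  imports Defs
begin

text \<open>An isometry that is additive on P preserves inner products (polarization), so
  fixing r_{X>Y} it preserves p \<cdot> r_{X>Y}, i.e. T p - p pairs equally with a_{X>Y} and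
  a_{Y>X}. Swapping X and Y in ballots shows that a_{X>Y} and a_{Y>X} have the same
  total weight N, so adding a multiple of 1 shifts both pairings by the same amount and
  a single constant makes both vanish.\<close>

lemma finite_ballots: "finite (ballots lam :: ('c::finite \<Rightarrow> nat) set)"
proof -
  have "ballots lam \<subseteq> {f::'c \<Rightarrow> nat. \<forall>x. (x \<in> UNIV \<longrightarrow> f x \<in> {1..length lam}) \<and> (x \<notin> UNIV \<longrightarrow> f x = 0)}"
    by (auto simp: ballots_def)
  moreover have "finite {f::'c \<Rightarrow> nat. \<forall>x. (x \<in> UNIV \<longrightarrow> f x \<in> {1..length lam}) \<and> (x \<notin> UNIV \<longrightarrow> f x = 0)}"
    by (rule finite_set_of_finite_funs) auto
  ultimately show ?thesis by (rule finite_subset)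
qed

lemma ballot_comp_transpose:
  assumes "b \<in> ballots lam"
  shows "b \<circ> transpose X Y \<in> ballots lam"
proof -
  have "card ((b \<circ> transpose X Y) -` {i}) = card (b -` {i})" for i
  proof -
    have "(b \<circ> transpose X Y) -` {i} = transpose X Y -` (b -` {i})"
      by auto
    moreover have "bij (transpose X Y)"
      by (rule bij_transpose)
    ultimately show ?thesis by (simp add: bij_def card_vimage_inj)
  qed
  thus ?thesis using assms by (auto simp: ballots_def)
qed

lemma sum_a_pref_commute:
  "(\<Sum>b\<in>ballots lam. a_pref lam X Y b) = (\<Sum>b\<in>ballots lam. a_pref lam Y X b)"
proof -
  let ?g = "\<lambda>b. b \<circ> transpose X Y"
  have "bij_betw ?g (ballots lam) (ballots lam)"
    by (rule bij_betwI[where g = ?g]) (auto simp: ballot_comp_transpose fun_eq_iff)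
  hence "(\<Sum>b\<in>ballots lam. a_pref lam Y X b) = (\<Sum>b\<in>ballots lam. a_pref lam Y X (?g b))"
    using sum.reindex_bij_betw[of ?g "ballots lam" "ballots lam" "a_pref lam Y X"] by simp
  also have "\<dots> = (\<Sum>b\<in>ballots lam. a_pref lam X Y b)"
    by (rule sum.cong) (auto simp: a_pref_def ballot_comp_transpose)
  finally show ?thesis by simp
qed

lemma pinner_add_self:
  "pinner lam (\<lambda>b. u b + v b) (\<lambda>b. u b + v b) = pinner lam u u + 2 * pinner lam u v + pinner lam v v"
  by (simp add: pinner_def sum.distrib[symmetric] sum_distrib_left algebra_simps)

lemma pinner_isometry:
  assumes add: "\<And>u v. u \<in> profiles lam \<Longrightarrow> v \<in> profiles lam \<Longrightarrow> T (\<lambda>b. u b + v b) = (\<lambda>b. T u b + T v b)"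
    and norm: "\<And>u. u \<in> profiles lam \<Longrightarrow> pinner lam (T u) (T u) = pinner lam u u"
    and "u \<in> profiles lam" "v \<in> profiles lam"
  shows "pinner lam (T u) (T v) = pinner lam u v"
proof -
  have "(\<lambda>b. u b + v b) \<in> profiles lam"
    using assms(3,4) by (auto simp: profiles_def)
  from norm[OF this] show ?thesis
    unfolding add[OF assms(3,4)] pinner_add_self using norm assms(3,4) by simp
qed

lemma pinner_r_pref:
  "pinner lam u (r_pref lam X Y) = pinner lam u (a_pref lam X Y) - pinner lam u (a_pref lam Y X)"
  by (simp add: pinner_def r_pref_def sum_subtractf[symmetric] algebra_simps)

lemma pinner_diff_left:
  "pinner lam (\<lambda>b. u b - v b) w = pinner lam u w - pinner lam v w"
  by (simp add: pinner_def sum_subtractf[symmetric] algebra_simps)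

lemma pinner_add_ones_left:
  "pinner lam (\<lambda>b. u b + c * ones lam b) w = pinner lam u w + c * (\<Sum>b\<in>ballots lam. w b)"
  by (simp add: pinner_def ones_def sum.distrib sum_distrib_left distrib_right)

lemma pinner_a_pref_eq_0:
  assumes "(\<Sum>b\<in>ballots lam. a_pref lam X Y b) = (0::real)"
  shows "pinner lam u (a_pref lam X Y :: 'c::finite profile) = 0"
proof -
  have "\<forall>b\<in>ballots lam. a_pref lam X Y b = (0::real)"
    using assms finite_ballots by (subst (asm) sum_nonneg_eq_0_iff) (auto simp: a_pref_def)
  thus ?thesis by (simp add: pinner_def)
qed

theorem mainTheorem6:
  fixes lam :: "nat list" and n :: nat
    and X Y :: "'c::finite"
    and T :: "'c profile \<Rightarrow> 'c profile" and p :: "'c profile"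
  assumes "n \<ge> 2" and "card (UNIV :: 'c set) = n"
    and "is_composition lam n"
    and "X \<noteq> Y"
    and "T \<in> SO_P lam"
    and "T (r_pref lam X Y) = r_pref lam X Y"
    and "p \<in> profiles lam"
  shows "\<exists>q. (\<exists>c::real. q = (\<lambda>b. c * ones lam b)) \<and>
             equiv_XY lam X Y (\<lambda>b. T p b + q b) p"
proof -
  have add: "\<And>u v. u \<in> profiles lam \<Longrightarrow> v \<in> profiles lam \<Longrightarrow> T (\<lambda>b. u b + v b) = (\<lambda>b. T u b + T v b)"
    and norm: "\<And>u. u \<in> profiles lam \<Longrightarrow> pinner lam (T u) (T u) = pinner lam u u"
    using assms(5) by (auto simp: SO_P_def)
  have "r_pref lam X Y \<in> profiles lam"
    by (auto simp: profiles_def r_pref_def a_pref_def)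
  from pinner_isometry[OF add norm assms(7) this]
  have "pinner lam (T p) (r_pref lam X Y) = pinner lam p (r_pref lam X Y)"
    unfolding assms(6) .
  then have balanced: "pinner lam (\<lambda>b. T p b - p b) (a_pref lam X Y) =
      pinner lam (\<lambda>b. T p b - p b) (a_pref lam Y X)" (is "?d = _")
    unfolding pinner_r_pref pinner_diff_left by linarith
  define N where "N = (\<Sum>b\<in>ballots lam. a_pref lam X Y b :: real)"
  define c where "c = - ?d / N"
  have "?d + c * N = 0"
    using pinner_a_pref_eq_0[of lam X Y] by (cases "N = 0") (auto simp: c_def N_def)
  moreover have "(\<lambda>b. T p b + c * ones lam b - p b) = (\<lambda>b. (T p b - p b) + c * ones lam b)"
    by (simp add: fun_eq_iff)
  ultimately have "equiv_XY lam X Y (\<lambda>b. T p b + c * ones lam b) p"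
    using balanced sum_a_pref_commute[of lam X Y]
    by (simp add: equiv_XY_def pinner_add_ones_left N_def)
  then show ?thesis by blast
qed

end
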